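(* Let $\{(R_n,B_n)\}_{n=1}^\infty\subseteq\mathcal{D}_d$ and let $\nu=\delta_{R_1^{-1}B_1}*\delta_{(R_2R_1)^{-1}B_2}*\cdots*\delta_{(R_n\cdots R_1)^{-1}B_n}*\cdots$ be the corresponding infinite convolution. Then $\mathcal{Z}(\nu)=\emptyset$.
   Context: $\mathcal{D}_d$ is the set of pairs $(R,B)$ with $R=\mathrm{diag}(m_1,\dots,m_d)$, $m_1,\dots,m_d\ge2$ integers, and $B$ a nonempty subset of $\{0,\dots,m_1-1\}\times\cdots\times\{0,\dots,m_d-1\}$. For finite $A$, $\delta_A=\frac{1}{\#A}\sum_{a\in A}\delta_a$; the infinite convolution is the weak limit (which exists for sequences in $\mathcal{D}_d$) of the finite convolutions $\delta_{R_1^{-1}B_1}*\cdots*\delta_{(R_n\cdots R_1)^{-1}B_n}$. $\mathcal{Z}(\nu)=\{\xi\in\mathbb{R}^d:\widehat{\nu}(\xi+k)=0\text{ for all }k\in\mathbb{Z}^d\}$ where $\widehat{\nu}(\xi)=\int e^{-2\pi i\xi\cdot x}d\nu(x)$. *)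

theory Defs
  imports "HOL-Probability.Probability"
begin

text \<open>Dimension d is the cardinality of the finite index type 'n.
  The pair (R_k, B_k) is given by digits m k i (R_k = diag(m k i)) and a digit set
  B k of integer vectors (as nat vectors). Indices k start at 1.\<close>

definition in_D :: "(nat \<Rightarrow> 'n::finite \<Rightarrow> nat) \<Rightarrow> (nat \<Rightarrow> (nat ^ 'n) set) \<Rightarrow> nat \<Rightarrow> bool" where
  "in_D m B k \<longleftrightarrow> (\<forall>i. m k i \<ge> 2) \<and> B k \<noteq> {} \<and> (\<forall>b\<in>B k. \<forall>i. b $ i < m k i)"

definition scaled_pt :: "(nat \<Rightarrow> 'n::finite \<Rightarrow> nat) \<Rightarrow> nat \<Rightarrow> nat ^ 'n \<Rightarrow> real ^ 'n" where
  "scaled_pt m k b = (\<chi> i. real (b $ i) / (\<Prod>j\<in>{1..k}. real (m j i)))"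

text \<open>Finite convolution delta_{R_1^{-1}B_1} * ... * delta_{(R_k...R_1)^{-1}B_k} as a pmf;
  delta_A is the uniform distribution pmf_of_set A on the finite set A.\<close>
fun fin_conv :: "(nat \<Rightarrow> 'n::finite \<Rightarrow> nat) \<Rightarrow> (nat \<Rightarrow> (nat ^ 'n) set) \<Rightarrow> nat \<Rightarrow> (real ^ 'n) pmf" where
  "fin_conv m B 0 = return_pmf 0"
| "fin_conv m B (Suc k) =
     map_pmf (\<lambda>(x, y). x + y)
       (pair_pmf (fin_conv m B k) (pmf_of_set (scaled_pt m (Suc k) ` B (Suc k))))"

definition weak_conv_Rd :: "(nat \<Rightarrow> ('a::topological_space) measure) \<Rightarrow> 'a measure \<Rightarrow> bool" where
  "weak_conv_Rd M N \<longleftrightarrow> (\<forall>f :: 'a \<Rightarrow> real. continuous_on UNIV f \<and> bounded (range f) \<longrightarrow>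
      (\<lambda>k. integral\<^sup>L (M k) f) \<longlonglongrightarrow> integral\<^sup>L N f)"

definition fourier :: "('a::euclidean_space) measure \<Rightarrow> 'a \<Rightarrow> complex" where
  "fourier \<nu> \<xi> = (LINT x|\<nu>. cis (- 2 * pi * (\<xi> \<bullet> x)))"

definition Zset :: "(real ^ 'n::finite) measure \<Rightarrow> (real ^ 'n) set" where
  "Zset \<nu> = {\<xi>. \<forall>k :: real ^ 'n. (\<forall>i. k $ i \<in> \<int>) \<longrightarrow> fourier \<nu> (\<xi> + k) = 0}"

end

(* Every finite convolution is supported on [0, 1 - 1/P_n]^d, where P_n = R_n ... R_1, so the
   weak limit nu lives on the unit cube.  Fix a coordinate i.  A point of the (n+1)-st convolution
   lies close to the face x_i = 1 only if its truncation to n digits does and the new digit is the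
   largest one, and close to the face x_i = 0 only if its truncation does and the new digit is the
   smallest one.  A digit cannot be both, so the product of the two masses shrinks by a factor
   1/4 at each step, and nu gives no mass to one of the two faces: nu lives on a product of
   half-open unit intervals.

   If xi were in Z(nu), then nu would annihilate exp(-2 pi i xi.x) T(x) for every trigonometric
   polynomial T.  On a product of half-open intervals, exp(2 pi i xi.x) is a bounded pointwise
   limit of trigonometric polynomials (Stone-Weierstrass on the circle, in each coordinate), so
   dominated convergence would give nu(R^d) = 0. *)

theory Submission
  imports Defs
begin

section \<open>Weak limits of discrete measures\<close>

lemma measure_map_pair_pmf_le:
  fixes p :: "'a pmf" and q :: "'b pmf"
  assumes "\<And>x y. x \<in> set_pmf p \<Longrightarrow> y \<in> set_pmf q \<Longrightarrow> f (x, y) \<in> E \<Longrightarrow> x \<in> A \<and> y \<in> C"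
  shows "measure (map_pmf f (pair_pmf p q)) E \<le> measure p A * measure q C"
proof -
  have "measure (map_pmf f (pair_pmf p q)) E = measure (pair_pmf p q) (f -` E \<inter> set_pmf (pair_pmf p q))"
    by (simp add: measure_Int_set_pmf del: set_pair_pmf)
  also have "\<dots> \<le> measure (pair_pmf p q) ((A \<inter> set_pmf p) \<times> (C \<inter> set_pmf q))"
    using assms by (intro measure_pmf.finite_measure_mono) auto
  also have "\<dots> = measure p (A \<inter> set_pmf p) * measure q (C \<inter> set_pmf q)"
    by (rule measure_pmf_prob_product) (auto intro: countable_subset)
  also have "\<dots> = measure p A * measure q C"
    by (simp add: measure_Int_set_pmf)
  finally show ?thesis .
qed

lemma measure_map_pair_pmf_le_fst:
  fixes p :: "'a pmf" and q :: "'b pmf"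
  assumes "\<And>x y. x \<in> set_pmf p \<Longrightarrow> y \<in> set_pmf q \<Longrightarrow> f (x, y) \<in> E \<Longrightarrow> x \<in> A"
  shows "measure (map_pmf f (pair_pmf p q)) E \<le> measure p A"
  using measure_map_pair_pmf_le[of p q f E A UNIV] assms by simp

lemma measure_pmf_add_le_1:
  assumes "A \<inter> C \<inter> set_pmf p = {}"
  shows "measure p A + measure p C \<le> 1"
proof -
  have "measure p A + measure p C = measure p (A \<inter> set_pmf p) + measure p (C \<inter> set_pmf p)"
    by (simp add: measure_Int_set_pmf)
  also have "\<dots> = measure p (A \<inter> set_pmf p \<union> C \<inter> set_pmf p)"
    using assms by (intro measure_pmf.finite_measure_Union[symmetric]) auto
  also have "\<dots> \<le> 1"
    by simp
  finally show ?thesis .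
qed

lemma integral_measure_pmf_le_measure:
  fixes p :: "'a pmf" and \<phi> :: "'a \<Rightarrow> real"
  assumes "\<And>x. 0 \<le> \<phi> x \<and> \<phi> x \<le> 1" and "\<And>x. 0 < \<phi> x \<Longrightarrow> x \<in> A"
  shows "integral\<^sup>L p \<phi> \<le> measure p A"
proof -
  have "integral\<^sup>L p \<phi> \<le> integral\<^sup>L p (indicator A)"
  proof (rule integral_mono)
    show "integrable p \<phi>"
      by (rule measure_pmf.integrable_const_bound[where B = 1]) (use assms(1) in auto)
    show "\<phi> x \<le> indicator A x" for x
      using assms[of x] by (cases "0 < \<phi> x") (auto simp: indicator_def)
  qed (auto intro: measure_pmf.integrable_const_bound[where B = 1])
  then show ?thesis by simp
qed

lemma measurable_continuous_sets_borel:
  "sets \<mu> = sets borel \<Longrightarrow> continuous_on UNIV f \<Longrightarrow> f \<in> borel_measurable \<mu>"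
  using borel_measurable_continuous_onI measurable_cong_sets by blast

lemma integrable_continuous_bounded:
  fixes f :: "'a::topological_space \<Rightarrow> 'b::{banach, second_countable_topology}"
  assumes "sets \<mu> = sets borel" "finite_measure \<mu>" "continuous_on UNIV f" "\<And>x. norm (f x) \<le> C"
  shows "integrable \<mu> f"
  using assms measurable_continuous_sets_borel[OF assms(1,3)]
  by (intro finite_measure.integrable_const_bound[OF assms(2), where B = C]) auto

lemma weak_conv_Rd_tendsto_clamped:
  fixes \<phi> :: "'a::topological_space \<Rightarrow> real"
  assumes "weak_conv_Rd M \<nu>" "continuous_on UNIV \<phi>" "\<And>x. 0 \<le> \<phi> x \<and> \<phi> x \<le> 1"
  shows "(\<lambda>n. integral\<^sup>L (M n) \<phi>) \<longlonglongrightarrow> integral\<^sup>L \<nu> \<phi>"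
proof -
  have "bounded (range \<phi>)"
    using assms(3) by (intro bounded_subset[OF bounded_cbox[of 0 1]]) auto
  then show ?thesis
    using assms(1,2) unfolding weak_conv_Rd_def by blast
qed

lemma measure_superlevel_le_of_weak_conv:
  fixes f :: "'a::topological_space \<Rightarrow> real"
  assumes conv: "weak_conv_Rd (\<lambda>n. measure_pmf (p n)) \<nu>"
    and \<nu>: "sets \<nu> = sets borel" "finite_measure \<nu>"
    and f: "continuous_on UNIV f" and \<delta>: "0 < \<delta>"
    and near: "\<And>n. J \<le> n \<Longrightarrow> measure (p n) {x. c - \<delta> < f x} \<le> q"
  shows "measure \<nu> {x. c \<le> f x} \<le> q"
proof -
  define \<phi> where "\<phi> x = max 0 (min 1 ((f x - c) / \<delta> + 1))" for x
  have \<phi>_cont: "continuous_on UNIV \<phi>"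
    unfolding \<phi>_def using f \<delta> by (intro continuous_intros) auto
  have \<phi>_range: "0 \<le> \<phi> x \<and> \<phi> x \<le> 1" for x
    by (simp add: \<phi>_def)
  have "{x. c \<le> f x} \<in> sets \<nu>"
    using \<nu>(1) f by (simp add: borel_closed closed_Collect_le)
  then have "measure \<nu> {x. c \<le> f x} = integral\<^sup>L \<nu> (indicator {x. c \<le> f x})"
    by simp
  also have "\<dots> \<le> integral\<^sup>L \<nu> \<phi>"
  proof (rule integral_mono)
    show "integrable \<nu> (indicator {x. c \<le> f x} :: _ \<Rightarrow> real)"
      using \<open>{x. c \<le> f x} \<in> sets \<nu>\<close> finite_measure.emeasure_finite[OF \<nu>(2)]
      by (intro integrable_real_indicator) (auto simp: top.not_eq_extremum)
    show "integrable \<nu> \<phi>"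
      using \<phi>_range by (intro integrable_continuous_bounded[OF \<nu> \<phi>_cont, where C = 1]) auto
    show "indicator {x. c \<le> f x} x \<le> \<phi> x" for x
    proof (cases "c \<le> f x")
      case True
      then have "1 \<le> (f x - c) / \<delta> + 1"
        using \<delta> by simp
      then show ?thesis
        using True by (simp add: \<phi>_def)
    qed (simp add: \<phi>_range)
  qed
  also have "\<dots> \<le> q"
  proof (rule LIMSEQ_le_const2[OF weak_conv_Rd_tendsto_clamped[OF conv \<phi>_cont \<phi>_range]])
    have "integral\<^sup>L (p n) \<phi> \<le> measure (p n) {x. c - \<delta> < f x}" for n
    proof (rule integral_measure_pmf_le_measure[OF \<phi>_range])
      fix x assume "0 < \<phi> x"
      then have "0 < (f x - c) / \<delta> + 1" by (simp add: \<phi>_def)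
      then show "x \<in> {x. c - \<delta> < f x}"
        using \<open>0 < \<delta>\<close> by (simp add: field_simps)
    qed
    then show "\<exists>N. \<forall>n\<ge>N. integral\<^sup>L (p n) \<phi> \<le> q"
      using near by (meson order.trans)
  qed
  finally show ?thesis .
qed

lemma AE_le_of_weak_conv:
  fixes f :: "'a::topological_space \<Rightarrow> real"
  assumes conv: "weak_conv_Rd (\<lambda>n. measure_pmf (p n)) \<nu>"
    and \<nu>: "sets \<nu> = sets borel" "finite_measure \<nu>"
    and f: "continuous_on UNIV f" and supp: "\<And>n x. x \<in> set_pmf (p n) \<Longrightarrow> f x \<le> c"
  shows "AE x in \<nu>. f x \<le> c"
proof -
  define \<phi> where "\<phi> x = max 0 (min 1 (f x - c))" for x
  have \<phi>_cont: "continuous_on UNIV \<phi>"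
    unfolding \<phi>_def using f by (intro continuous_intros) auto
  have \<phi>_range: "0 \<le> \<phi> x \<and> \<phi> x \<le> 1" for x
    by (simp add: \<phi>_def)
  have "integral\<^sup>L (p n) \<phi> = 0" for n
  proof -
    have "\<phi> x = 0" if "x \<in> set_pmf (p n)" for x
    proof -
      have "f x \<le> c" using supp[OF that] .
      then show ?thesis by (simp add: \<phi>_def)
    qed
    then have "AE x in p n. \<phi> x = 0"
      by (simp add: AE_measure_pmf_iff)
    then show ?thesis
      by (simp add: integral_cong_AE)
  qed
  then have "integral\<^sup>L \<nu> \<phi> = 0"
    using weak_conv_Rd_tendsto_clamped[OF conv \<phi>_cont \<phi>_range] by (simp add: LIMSEQ_const_iff)
  moreover have "integrable \<nu> \<phi>"
    using \<phi>_range by (intro integrable_continuous_bounded[OF \<nu> \<phi>_cont, where C = 1]) auto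
  ultimately have "AE x in \<nu>. \<phi> x = 0"
    using integral_nonneg_eq_0_iff_AE[of \<nu> \<phi>] \<phi>_range by auto
  then show ?thesis
    by eventually_elim (auto simp: \<phi>_def)
qed

section \<open>Mass of the finite convolutions near the faces of the cube\<close>

definition diag_prod :: "(nat \<Rightarrow> 'n::finite \<Rightarrow> nat) \<Rightarrow> nat \<Rightarrow> 'n \<Rightarrow> real" where
  "diag_prod m n i = (\<Prod>j\<in>{1..n}. real (m j i))"

lemma diag_prod_0 [simp]: "diag_prod m 0 i = 1"
  by (simp add: diag_prod_def)

lemma diag_prod_Suc: "diag_prod m (Suc n) i = diag_prod m n i * m (Suc n) i"
  by (simp add: diag_prod_def prod.nat_ivl_Suc' mult.commute)

lemma scaled_pt_nth: "scaled_pt m k b $ i = real (b $ i) / diag_prod m k i"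
  by (simp add: scaled_pt_def diag_prod_def)

lemma mult_le_quarter:
  fixes a b :: real
  assumes "0 \<le> a" "0 \<le> b" "a + b \<le> 1"
  shows "a * b \<le> 1 / 4"
proof -
  have "4 * (a * b) \<le> (a + b)\<^sup>2"
    using sum_squares_ge_zero[of "a - b" 0] by (simp add: power2_eq_square algebra_simps)
  also have "\<dots> \<le> 1"
    using assms by (simp add: power_le_one)
  finally show ?thesis by simp
qed

locale admissible_digits =
  fixes m :: "nat \<Rightarrow> 'n::finite \<Rightarrow> nat" and B :: "nat \<Rightarrow> (nat ^ 'n) set"
  assumes in_D: "\<And>k. 1 \<le> k \<Longrightarrow> in_D m B k"
begin

abbreviation digit_pmf :: "nat \<Rightarrow> (real ^ 'n) pmf" where
  "digit_pmf k \<equiv> pmf_of_set (scaled_pt m k ` B k)"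

lemma radix_ge_2: "1 \<le> k \<Longrightarrow> 2 \<le> m k i"
  using in_D by (auto simp: in_D_def)

lemma diag_prod_ge_1: "1 \<le> diag_prod m n i"
proof (induction n)
  case (Suc n)
  have "1 \<le> real (m (Suc n) i)"
    using radix_ge_2[of "Suc n" i] by simp
  with Suc show ?case
    unfolding diag_prod_Suc using mult_mono[of 1 _ 1] by fastforce
qed simp

lemma inverse_diag_prod_Suc_le: "1 / diag_prod m (Suc n) i \<le> 1 / diag_prod m n i"
  using diag_prod_ge_1[of n i] radix_ge_2[of "Suc n" i]
  by (simp add: diag_prod_Suc divide_simps)

lemma finite_digits: "1 \<le> k \<Longrightarrow> finite (B k)"
proof -
  assume k: "1 \<le> k"
  have "B k \<subseteq> vec_lambda ` (PiE UNIV (\<lambda>i. {..<m k i}))"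
  proof
    fix b assume "b \<in> B k"
    then have "\<forall>i. b $ i < m k i"
      using in_D[OF k] by (auto simp: in_D_def)
    then show "b \<in> vec_lambda ` (PiE UNIV (\<lambda>i. {..<m k i}))"
      by (intro image_eqI[of _ _ "\<lambda>i. b $ i"]) auto
  qed
  then show ?thesis
    by (rule finite_subset) (intro finite_imageI finite_PiE; auto)
qed

lemma digit_pmf_nth:
  assumes "1 \<le> k" "s \<in> set_pmf (digit_pmf k)"
  obtains d :: nat where "d < m k i" "s $ i = d / diag_prod m k i"
proof -
  have "B k \<noteq> {}"
    using in_D[OF assms(1)] by (simp add: in_D_def)
  then obtain b where "b \<in> B k" "s = scaled_pt m k b"
    using assms finite_digits by auto
  moreover have "b $ i < m k i"
    using in_D[OF assms(1)] \<open>b \<in> B k\<close> by (simp add: in_D_def)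
  ultimately show ?thesis
    using that by (simp add: scaled_pt_nth)
qed

lemma digit_pmf_nth_bounds:
  assumes "s \<in> set_pmf (digit_pmf (Suc n))"
  shows "0 \<le> s $ i \<and> s $ i \<le> 1 / diag_prod m n i - 1 / diag_prod m (Suc n) i"
proof -
  obtain d :: nat where d: "d < m (Suc n) i" "s $ i = d / diag_prod m (Suc n) i"
    using digit_pmf_nth[OF _ assms] by auto
  define P M where "P = diag_prod m n i" and "M = real (m (Suc n) i)"
  have "0 < P" "2 \<le> M"
    using diag_prod_ge_1[of n i] radix_ge_2[of "Suc n" i] by (simp_all add: P_def M_def)
  have "real d \<le> M - 1"
    using d(1) by (simp add: M_def)
  then have "d / (P * M) \<le> (M - 1) / (P * M)"
    using \<open>0 < P\<close> \<open>2 \<le> M\<close> by (simp add: divide_right_mono)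
  also have "\<dots> = 1 / P - 1 / (P * M)"
    using \<open>0 < P\<close> \<open>2 \<le> M\<close> by (simp add: field_simps)
  finally show ?thesis
    using d(2) \<open>0 < P\<close> \<open>2 \<le> M\<close> by (simp add: diag_prod_Suc P_def M_def)
qed

lemma fin_conv_nth_bounds:
  "x \<in> set_pmf (fin_conv m B n) \<Longrightarrow> 0 \<le> x $ i \<and> x $ i \<le> 1 - 1 / diag_prod m n i"
proof (induction n arbitrary: x)
  case (Suc n)
  then obtain y s where "y \<in> set_pmf (fin_conv m B n)" "s \<in> set_pmf (digit_pmf (Suc n))" "x = y + s"
    by auto
  with Suc.IH[of y] digit_pmf_nth_bounds[of s n i] show ?case
    by auto
qed simp

definition top_mass :: "'n \<Rightarrow> nat \<Rightarrow> real" where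
  "top_mass i J = measure (fin_conv m B J) {x. 1 - 2 / diag_prod m J i < x $ i}"

definition bottom_mass :: "'n \<Rightarrow> nat \<Rightarrow> real" where
  "bottom_mass i J = measure (fin_conv m B J) {x. x $ i < 1 / diag_prod m J i}"

lemma top_mass_Suc_le:
  "top_mass i (Suc J) \<le>
     top_mass i J * measure (digit_pmf (Suc J)) {s. 1 / diag_prod m J i - 2 / diag_prod m (Suc J) i < s $ i}"
  unfolding top_mass_def fin_conv.simps(2)
proof (rule measure_map_pair_pmf_le, clarsimp)
  fix y s assume y: "y \<in> set_pmf (fin_conv m B J)" and s: "s \<in> set_pmf (digit_pmf (Suc J))"
    and x: "1 - 2 / diag_prod m (Suc J) i < y $ i + s $ i"
  show "1 - 2 / diag_prod m J i < y $ i \<and> 1 / diag_prod m J i - 2 / diag_prod m (Suc J) i < s $ i"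
    using fin_conv_nth_bounds[OF y, of i] digit_pmf_nth_bounds[OF s, of i] x inverse_diag_prod_Suc_le[of J i]
    by (simp add: field_simps)
qed

lemma bottom_mass_Suc_le:
  "bottom_mass i (Suc J) \<le>
     bottom_mass i J * measure (digit_pmf (Suc J)) {s. s $ i < 1 / diag_prod m (Suc J) i}"
  unfolding bottom_mass_def fin_conv.simps(2)
proof (rule measure_map_pair_pmf_le, clarsimp)
  fix y s assume y: "y \<in> set_pmf (fin_conv m B J)" and s: "s \<in> set_pmf (digit_pmf (Suc J))"
    and x: "y $ i + s $ i < 1 / diag_prod m (Suc J) i"
  show "y $ i < 1 / diag_prod m J i \<and> s $ i < 1 / diag_prod m (Suc J) i"
    using fin_conv_nth_bounds[OF y, of i] digit_pmf_nth_bounds[OF s, of i] x inverse_diag_prod_Suc_le[of J i]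
    by linarith
qed

text \<open>On the support of the digit distribution the two events say that the i-th digit is
  0, resp. m (Suc J) i - 1; they are disjoint because m (Suc J) i \<ge> 2.\<close>
lemma digit_extremes_le_1:
  "measure (digit_pmf (Suc J)) {s. s $ i < 1 / diag_prod m (Suc J) i} +
   measure (digit_pmf (Suc J)) {s. 1 / diag_prod m J i - 2 / diag_prod m (Suc J) i < s $ i} \<le> 1"
proof (rule measure_pmf_add_le_1, safe)
  fix s assume s: "s \<in> set_pmf (digit_pmf (Suc J))"
    and low: "s $ i < 1 / diag_prod m (Suc J) i"
    and high: "1 / diag_prod m J i - 2 / diag_prod m (Suc J) i < s $ i"
  obtain d :: nat where d: "s $ i = d / diag_prod m (Suc J) i"
    using digit_pmf_nth[OF _ s] by auto
  define P M where "P = diag_prod m J i" and "M = real (m (Suc J) i)"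
  have "0 < P" "2 \<le> M"
    using diag_prod_ge_1[of J i] radix_ge_2[of "Suc J" i] by (simp_all add: P_def M_def)
  have "d < 1"
  proof -
    have "d / (P * M) < 1 / (P * M)"
      using low by (simp add: d diag_prod_Suc flip: P_def M_def)
    then show ?thesis
      using \<open>0 < P\<close> \<open>2 \<le> M\<close> by (simp add: divide_less_cancel)
  qed
  moreover have "M - 2 < d"
  proof -
    have "1 / P - 2 / (P * M) = (M - 2) / (P * M)"
      using \<open>0 < P\<close> \<open>2 \<le> M\<close> by (simp add: field_simps)
    then have "(M - 2) / (P * M) < d / (P * M)"
      using high by (simp add: d diag_prod_Suc flip: P_def M_def)
    then show ?thesis
      using \<open>0 < P\<close> \<open>2 \<le> M\<close> by (simp add: divide_less_cancel)
  qed
  ultimately show "s \<in> {}"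
    using \<open>2 \<le> M\<close> by linarith
qed

lemma top_mass_mult_bottom_mass_le: "top_mass i J * bottom_mass i J \<le> (1 / 4) ^ J"
proof (induction J)
  case 0
  show ?case
    by (simp add: top_mass_def bottom_mass_def mult_le_one)
next
  case (Suc J)
  define p1 where "p1 = measure (digit_pmf (Suc J)) {s. 1 / diag_prod m J i - 2 / diag_prod m (Suc J) i < s $ i}"
  define p0 where "p0 = measure (digit_pmf (Suc J)) {s. s $ i < 1 / diag_prod m (Suc J) i}"
  have "top_mass i (Suc J) * bottom_mass i (Suc J) \<le> (top_mass i J * p1) * (bottom_mass i J * p0)"
    using top_mass_Suc_le[of i J] bottom_mass_Suc_le[of i J]
    by (intro mult_mono) (simp_all add: top_mass_def bottom_mass_def p0_def p1_def)
  also have "\<dots> = (top_mass i J * bottom_mass i J) * (p0 * p1)"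
    by (simp add: algebra_simps)
  also have "\<dots> \<le> (1 / 4) ^ J * (1 / 4)"
    using Suc.IH mult_le_quarter[of p0 p1] digit_extremes_le_1[of J i]
    by (intro mult_mono) (simp_all add: p0_def p1_def)
  finally show ?case
    by simp
qed

lemma fin_conv_upper_tail_le:
  "measure (fin_conv m B (J + k)) {x. t < x $ i} \<le>
     measure (fin_conv m B J) {x. t - (1 / diag_prod m J i - 1 / diag_prod m (J + k) i) < x $ i}"
proof (induction k arbitrary: t)
  case (Suc k)
  let ?\<epsilon> = "1 / diag_prod m (J + k) i - 1 / diag_prod m (Suc (J + k)) i"
  have "measure (fin_conv m B (J + Suc k)) {x. t < x $ i} \<le> measure (fin_conv m B (J + k)) {x. t - ?\<epsilon> < x $ i}"
    unfolding add_Suc_right fin_conv.simps(2)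
  proof (rule measure_map_pair_pmf_le_fst, clarsimp)
    fix y s assume "s \<in> set_pmf (digit_pmf (Suc (J + k)))" "t < y $ i + s $ i"
    then show "t - ?\<epsilon> < y $ i"
      using digit_pmf_nth_bounds[of s "J + k" i] by linarith
  qed
  also have "\<dots> \<le> measure (fin_conv m B J) {x. t - ?\<epsilon> - (1 / diag_prod m J i - 1 / diag_prod m (J + k) i) < x $ i}"
    by (rule Suc.IH)
  also have "t - ?\<epsilon> - (1 / diag_prod m J i - 1 / diag_prod m (J + k) i) =
      t - (1 / diag_prod m J i - 1 / diag_prod m (J + Suc k) i)"
    by simp
  finally show ?case .
qed simp

lemma fin_conv_lower_tail_le:
  "measure (fin_conv m B (J + k)) {x. x $ i < t} \<le> measure (fin_conv m B J) {x. x $ i < t}"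
proof (induction k)
  case (Suc k)
  have "measure (fin_conv m B (J + Suc k)) {x. x $ i < t} \<le> measure (fin_conv m B (J + k)) {x. x $ i < t}"
    unfolding add_Suc_right fin_conv.simps(2)
  proof (rule measure_map_pair_pmf_le_fst, clarsimp)
    fix y s assume "s \<in> set_pmf (digit_pmf (Suc (J + k)))" "y $ i + s $ i < t"
    then show "y $ i < t"
      using digit_pmf_nth_bounds[of s "J + k" i] by linarith
  qed
  with Suc.IH show ?case
    by linarith
qed simp

context
  fixes \<nu> :: "(real ^ 'n) measure"
  assumes \<nu>_borel: "sets \<nu> = sets borel"
    and \<nu>_finite: "finite_measure \<nu>"
    and \<nu>_lim: "weak_conv_Rd (\<lambda>k. measure_pmf (fin_conv m B k)) \<nu>"
begin

lemma weak_limit_upper_face_le: "measure \<nu> {x. 1 \<le> x $ i} \<le> top_mass i J"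
proof (rule measure_superlevel_le_of_weak_conv[OF \<nu>_lim \<nu>_borel \<nu>_finite])
  let ?P = "\<lambda>n. diag_prod m n i"
  show "0 < 1 / ?P J"
    using diag_prod_ge_1[of J i] by simp
  fix n assume "J \<le> n"
  then obtain k where n: "n = J + k"
    using le_Suc_ex by blast
  have "measure (fin_conv m B n) {x. 1 - 1 / ?P J < x $ i} \<le>
      measure (fin_conv m B J) {x. 1 - 1 / ?P J - (1 / ?P J - 1 / ?P n) < x $ i}"
    unfolding n by (rule fin_conv_upper_tail_le)
  also have "\<dots> \<le> top_mass i J"
    unfolding top_mass_def
  proof (rule measure_pmf.finite_measure_mono, safe)
    fix x :: "real ^ 'n" assume "1 - 1 / ?P J - (1 / ?P J - 1 / ?P n) < x $ i"
    moreover have "0 < 1 / ?P n"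
      using diag_prod_ge_1[of n i] by simp
    moreover have "2 / ?P J = 2 * (1 / ?P J)"
      by simp
    ultimately show "1 - 2 / ?P J < x $ i"
      by linarith
  qed simp
  finally show "measure (fin_conv m B n) {x. 1 - 1 / ?P J < x $ i} \<le> top_mass i J" .
qed (intro continuous_intros)

lemma weak_limit_lower_face_le: "measure \<nu> {x. x $ i \<le> 0} \<le> bottom_mass i J"
proof -
  have "measure \<nu> {x. 0 \<le> - x $ i} \<le> bottom_mass i J"
  proof (rule measure_superlevel_le_of_weak_conv[OF \<nu>_lim \<nu>_borel \<nu>_finite])
    show "0 < 1 / diag_prod m J i"
      using diag_prod_ge_1[of J i] by simp
    fix n assume "J \<le> n"
    then obtain k where n: "n = J + k"
      using le_Suc_ex by blast
    show "measure (fin_conv m B n) {x. 0 - 1 / diag_prod m J i < - x $ i} \<le> bottom_mass i J"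
      using fin_conv_lower_tail_le[of J k i "1 / diag_prod m J i"] by (simp add: n bottom_mass_def)
  qed (intro continuous_intros)
  then show ?thesis
    by simp
qed

lemma weak_limit_face_null: "measure \<nu> {x. 1 \<le> x $ i} = 0 \<or> measure \<nu> {x. x $ i \<le> 0} = 0"
proof -
  let ?a = "measure \<nu> {x. 1 \<le> x $ i}" and ?b = "measure \<nu> {x. x $ i \<le> 0}"
  have "?a * ?b \<le> (1 / 4) ^ J" for J
  proof -
    have "?a * ?b \<le> top_mass i J * bottom_mass i J"
      using weak_limit_upper_face_le weak_limit_lower_face_le
      by (intro mult_mono) (simp_all add: top_mass_def)
    also have "\<dots> \<le> (1 / 4) ^ J"
      by (rule top_mass_mult_bottom_mass_le)
    finally show ?thesis .
  qed
  then have "?a * ?b \<le> 0"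
    by (intro LIMSEQ_le_const[OF LIMSEQ_power_zero[of "1 / 4 :: real"]]) auto
  then show ?thesis
    using measure_nonneg[of \<nu> "{x. 1 \<le> x $ i}"] measure_nonneg[of \<nu> "{x. x $ i \<le> 0}"]
    by (auto simp: mult_le_0_iff)
qed

lemma AE_weak_limit_unit_interval: "AE x in \<nu>. 0 \<le> x $ i \<and> x $ i \<le> 1"
proof -
  have "AE x in \<nu>. x $ i \<le> 1"
  proof (rule AE_le_of_weak_conv[OF \<nu>_lim \<nu>_borel \<nu>_finite])
    fix n x assume "x \<in> set_pmf (fin_conv m B n)"
    moreover have "0 < 1 / diag_prod m n i"
      using diag_prod_ge_1[of n i] by simp
    ultimately show "x $ i \<le> 1"
      using fin_conv_nth_bounds[of x n i] by linarith
  qed (intro continuous_intros)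
  moreover have "AE x in \<nu>. - x $ i \<le> 0"
    by (rule AE_le_of_weak_conv[OF \<nu>_lim \<nu>_borel \<nu>_finite])
      (auto intro!: continuous_intros dest: fin_conv_nth_bounds)
  ultimately show ?thesis
    by eventually_elim simp
qed

lemma AE_weak_limit_half_open:
  "(AE x in \<nu>. 0 \<le> x $ i \<and> x $ i < 1) \<or> (AE x in \<nu>. 0 < x $ i \<and> x $ i \<le> 1)"
proof -
  have null_AE: "AE x in \<nu>. x \<notin> A" if "A \<in> sets borel" "measure \<nu> A = 0" for A
    using that \<nu>_borel finite_measure.emeasure_eq_measure[OF \<nu>_finite]
    by (intro AE_not_in null_setsI) auto
  have closed: "{x :: real ^ 'n. 1 \<le> x $ i} \<in> sets borel" "{x :: real ^ 'n. x $ i \<le> 0} \<in> sets borel"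
    by (auto intro!: borel_closed closed_Collect_le continuous_intros)
  from weak_limit_face_null[of i] show ?thesis
  proof
    assume null: "measure \<nu> {x. 1 \<le> x $ i} = 0"
    have "AE x in \<nu>. 0 \<le> x $ i \<and> x $ i < 1"
      using null_AE[OF closed(1) null] AE_weak_limit_unit_interval[of i] by eventually_elim auto
    then show ?thesis ..
  next
    assume null: "measure \<nu> {x. x $ i \<le> 0} = 0"
    have "AE x in \<nu>. 0 < x $ i \<and> x $ i \<le> 1"
      using null_AE[OF closed(2) null] AE_weak_limit_unit_interval[of i] by eventually_elim auto
    then show ?thesis ..
  qed
qed

end

end

section \<open>Trigonometric polynomials\<close>

inductive trig_poly :: "(real ^ 'n::finite \<Rightarrow> complex) \<Rightarrow> bool" where
  cis: "(\<And>i. k $ i \<in> \<int>) \<Longrightarrow> trig_poly (\<lambda>x. cis (2 * pi * (k \<bullet> x)))"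
| add: "trig_poly f \<Longrightarrow> trig_poly g \<Longrightarrow> trig_poly (\<lambda>x. f x + g x)"
| scale: "trig_poly f \<Longrightarrow> trig_poly (\<lambda>x. c * f x)"

lemma trig_poly_const: "trig_poly (\<lambda>x. c)"
  using trig_poly.scale[OF trig_poly.cis[of 0], of c] by simp

lemma trig_poly_cis_nth:
  "trig_poly (\<lambda>x :: real ^ 'n::finite. cis (2 * pi * x $ i))"
  "trig_poly (\<lambda>x :: real ^ 'n::finite. cis (- (2 * pi * x $ i)))"
proof -
  have "trig_poly (\<lambda>x :: real ^ 'n. cis (2 * pi * (axis i 1 \<bullet> x)))"
    "trig_poly (\<lambda>x :: real ^ 'n. cis (2 * pi * ((- axis i 1) \<bullet> x)))"
    by (intro trig_poly.cis; simp add: axis_def)+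
  then show "trig_poly (\<lambda>x :: real ^ 'n. cis (2 * pi * x $ i))"
    "trig_poly (\<lambda>x :: real ^ 'n. cis (- (2 * pi * x $ i)))"
    by (simp_all add: inner_axis')
qed

lemma trig_poly_mult_cis:
  "trig_poly g \<Longrightarrow> (\<And>i. k $ i \<in> \<int>) \<Longrightarrow> trig_poly (\<lambda>x. cis (2 * pi * (k \<bullet> x)) * g x)"
proof (induction g rule: trig_poly.induct)
  case (cis k')
  then have "trig_poly (\<lambda>x. cis (2 * pi * ((k + k') \<bullet> x)))"
    by (intro trig_poly.cis) (simp add: Ints_add)
  then show ?case
    by (simp add: cis_mult inner_add_left distrib_left)
next
  case (add f g)
  then have "trig_poly (\<lambda>x. cis (2 * pi * (k \<bullet> x)) * f x + cis (2 * pi * (k \<bullet> x)) * g x)"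
    by (intro trig_poly.add) auto
  then show ?case
    by (simp add: distrib_left)
next
  case (scale f c)
  then have "trig_poly (\<lambda>x. c * (cis (2 * pi * (k \<bullet> x)) * f x))"
    by (intro trig_poly.scale) auto
  then show ?case
    by (simp add: algebra_simps)
qed

lemma trig_poly_mult: "trig_poly f \<Longrightarrow> trig_poly g \<Longrightarrow> trig_poly (\<lambda>x. f x * g x)"
proof (induction f rule: trig_poly.induct)
  case (cis k)
  show ?case
    by (rule trig_poly_mult_cis[OF cis.prems]) (rule cis.hyps)
next
  case (add f1 f2)
  then have "trig_poly (\<lambda>x. f1 x * g x + f2 x * g x)"
    by (intro trig_poly.add)
  then show ?case
    by (simp add: distrib_right)
next
  case (scale f c)
  then have "trig_poly (\<lambda>x. c * (f x * g x))"
    by (intro trig_poly.scale)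
  then show ?case
    by (simp add: algebra_simps)
qed

lemma trig_poly_prod: "finite I \<Longrightarrow> (\<And>i. i \<in> I \<Longrightarrow> trig_poly (f i)) \<Longrightarrow> trig_poly (\<lambda>x. \<Prod>i\<in>I. f i x)"
proof (induction I rule: finite_induct)
  case (insert j I)
  then have "trig_poly (\<lambda>x. f j x * (\<Prod>i\<in>I. f i x))"
    by (intro trig_poly_mult) auto
  with insert show ?case
    by simp
qed (simp add: trig_poly_const)

lemma trig_poly_continuous_bounded:
  "trig_poly f \<Longrightarrow> continuous_on UNIV f \<and> (\<exists>C. \<forall>x. norm (f x) \<le> C)"
proof (induction f rule: trig_poly.induct)
  case (cis k)
  show ?case
    by (auto intro!: continuous_intros)
next
  case (add f g)
  then obtain C D where "\<forall>x. norm (f x) \<le> C" "\<forall>x. norm (g x) \<le> D"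
    by blast
  then have "\<forall>x. norm (f x + g x) \<le> C + D"
    by (metis add_mono norm_triangle_le)
  with add show ?case
    by (auto intro!: continuous_intros)
next
  case (scale f c)
  then obtain C where "\<forall>x. norm (f x) \<le> C"
    by blast
  then have "\<forall>x. norm (c * f x) \<le> norm c * C"
    by (simp add: norm_mult mult_left_mono)
  with scale show ?case
    by (auto intro!: continuous_intros)
qed

lemma trig_poly_real_polynomial_function:
  assumes "real_polynomial_function q"
  shows "trig_poly (\<lambda>x :: real ^ 'n::finite. complex_of_real (q (cis (2 * pi * x $ i))))"
  using assms
proof (induction q rule: real_polynomial_function.induct)
  case (linear q)
  interpret bounded_linear q by fact
  have q: "q z = Re z * q 1 + Im z * q \<i>" for z
  proof -
    have "z = Re z *\<^sub>R 1 + Im z *\<^sub>R \<i>"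
      by (simp add: complex_eq_iff)
    then have "q z = q (Re z *\<^sub>R 1 + Im z *\<^sub>R \<i>)"
      by simp
    then show ?thesis
      by (simp add: add scale)
  qed
  define a b where "a = (complex_of_real (q 1) - \<i> * q \<i>) / 2" and "b = (complex_of_real (q 1) + \<i> * q \<i>) / 2"
  have "complex_of_real (q (cis t)) = a * cis t + b * cis (- t)" for t
  proof -
    have "complex_of_real (q (cis t)) = complex_of_real (cos t * q 1 + sin t * q \<i>)"
      using q[of "cis t"] by simp
    also have "\<dots> = a * cis t + b * cis (- t)"
      unfolding a_def b_def by (simp add: complex_eq_iff add_divide_distrib[symmetric] algebra_simps)
    finally show ?thesis .
  qed
  moreover have "trig_poly (\<lambda>x :: real ^ 'n. a * cis (2 * pi * x $ i) + b * cis (- (2 * pi * x $ i)))"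
    by (intro trig_poly.add trig_poly.scale trig_poly_cis_nth)
  ultimately show ?case
    by simp
next
  case (const c)
  show ?case
    by (rule trig_poly_const)
next
  case (add f g)
  then show ?case
    by (simp add: trig_poly.add)
next
  case (mult f g)
  then show ?case
    by (simp add: trig_poly_mult)
qed

lemma trig_poly_polynomial_function:
  assumes "polynomial_function (p :: complex \<Rightarrow> complex)"
  shows "trig_poly (\<lambda>x :: real ^ 'n::finite. p (cis (2 * pi * x $ i)))"
proof -
  have "real_polynomial_function (Re \<circ> p)" "real_polynomial_function (Im \<circ> p)"
    using assms bounded_linear_Re bounded_linear_Im unfolding polynomial_function_def by blast+
  then have "trig_poly (\<lambda>x :: real ^ 'n. complex_of_real ((Re \<circ> p) (cis (2 * pi * x $ i))) +
      \<i> * complex_of_real ((Im \<circ> p) (cis (2 * pi * x $ i))))"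
    by (intro trig_poly.add trig_poly.scale trig_poly_real_polynomial_function)
  then show ?thesis
    by (simp add: complex_eq[symmetric])
qed

lemma integral_cis_mult_trig_poly_eq_0:
  fixes \<mu> :: "(real ^ 'n::finite) measure"
  assumes \<mu>: "sets \<mu> = sets borel" "finite_measure \<mu>" and "\<xi> \<in> Zset \<mu>" and "trig_poly f"
  shows "(LINT x|\<mu>. cis (- 2 * pi * (\<xi> \<bullet> x)) * f x) = 0"
  using \<open>trig_poly f\<close>
proof (induction f rule: trig_poly.induct)
  case (cis k)
  have "cis (- 2 * pi * (\<xi> \<bullet> x)) * cis (2 * pi * (k \<bullet> x)) = cis (- 2 * pi * ((\<xi> + - k) \<bullet> x))" for x
    by (simp add: cis_mult inner_add_left algebra_simps)
  then have "(LINT x|\<mu>. cis (- 2 * pi * (\<xi> \<bullet> x)) * cis (2 * pi * (k \<bullet> x))) = fourier \<mu> (\<xi> + - k)"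
    by (simp add: fourier_def)
  also have "\<dots> = 0"
  proof -
    have "\<forall>i. (- k) $ i \<in> \<int>"
      using cis by simp
    with \<open>\<xi> \<in> Zset \<mu>\<close> show ?thesis
      unfolding Zset_def by blast
  qed
  finally show ?case .
next
  case (add f g)
  have "integrable \<mu> (\<lambda>x. cis (- 2 * pi * (\<xi> \<bullet> x)) * h x)" if h: "trig_poly h" for h
  proof -
    obtain C where "continuous_on UNIV h" "\<forall>x. norm (h x) \<le> C"
      using trig_poly_continuous_bounded[OF h] by blast
    then show ?thesis
      by (intro integrable_continuous_bounded[OF \<mu>, where C = C]) (auto intro!: continuous_intros simp: norm_mult)
  qed
  with add show ?case
    by (simp add: distrib_left)
next
  case (scale f c)
  then show ?case
    by (simp add: mult.left_commute)
qed

section \<open>Pointwise polynomial approximation on the unit circle\<close>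

definition arc_power :: "real \<Rightarrow> complex \<Rightarrow> complex" where
  "arc_power a z = cis (a * Arg2pi z)"

lemma norm_arc_power [simp]: "norm (arc_power a z) = 1"
  by (simp add: arc_power_def)

lemma arc_power_cis:
  assumes "0 \<le> t" "t < 1"
  shows "arc_power a (cis (2 * pi * t)) = cis (2 * pi * a * t)"
proof -
  have "Arg2pi (cis (2 * pi * t)) = 2 * pi * t"
    using assms by (simp add: cis_conv_exp Arg2pi_exp)
  then show ?thesis
    by (simp add: arc_power_def algebra_simps)
qed

lemma cis_ne_1:
  assumes "0 < t" "t < 1"
  shows "cis (2 * pi * t) \<noteq> 1"
proof
  assume "cis (2 * pi * t) = 1"
  then have "cos (2 * pi * t) = 1"
    by (simp add: complex_eq_iff)
  then obtain n :: int where "2 * pi * t = real_of_int n * 2 * pi"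
    using cos_one_2pi_int by blast
  then have "t = real_of_int n"
    by simp
  with assms have "0 < n" "n < 1"
    by simp_all
  then show False
    by simp
qed

lemma isCont_arc_power:
  assumes "norm z = 1" "z \<noteq> 1"
  shows "isCont (arc_power a) z"
proof -
  have "z \<notin> \<real>\<^sub>\<ge>\<^sub>0"
    using assms by (auto simp: complex_nonneg_Reals_iff complex_eq_iff cmod_eq_Re)
  then have "isCont Arg2pi z"
    by (rule continuous_at_Arg2pi)
  then show ?thesis
    unfolding arc_power_def cis_conv_exp by (intro continuous_intros)
qed

definition blend_at_1 :: "(complex \<Rightarrow> complex) \<Rightarrow> complex \<Rightarrow> real \<Rightarrow> complex \<Rightarrow> complex" where
  "blend_at_1 h v e z =
     (let w = min 1 (norm (z - 1) / e) in complex_of_real w * h z + complex_of_real (1 - w) * v)"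

lemma blend_at_1_1 [simp]: "blend_at_1 h v e 1 = v"
  by (simp add: blend_at_1_def)

lemma blend_at_1_far: "0 < e \<Longrightarrow> e \<le> norm (z - 1) \<Longrightarrow> blend_at_1 h v e z = h z"
  by (simp add: blend_at_1_def)

lemma norm_blend_at_1_le:
  assumes "norm (h z) \<le> 1" "norm v \<le> 1" "0 < e"
  shows "norm (blend_at_1 h v e z) \<le> 1"
proof -
  define w where "w = min 1 (norm (z - 1) / e)"
  have w: "0 \<le> w" "w \<le> 1"
    using assms(3) by (simp_all add: w_def)
  have "norm (complex_of_real (1 - w)) = 1 - w"
    using w by (simp only: norm_of_real abs_of_nonneg diff_ge_0_iff_ge)
  then have "norm (blend_at_1 h v e z) \<le> w * norm (h z) + (1 - w) * norm v"
    unfolding blend_at_1_def Let_def w_def[symmetric]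
    using norm_triangle_ineq[of "complex_of_real w * h z" "complex_of_real (1 - w) * v"] w
    by (simp only: norm_mult norm_of_real abs_of_nonneg)
  also have "\<dots> \<le> w * 1 + (1 - w) * 1"
    using assms w by (intro add_mono mult_left_mono) auto
  finally show ?thesis
    by simp
qed

lemma norm_blend_at_1_diff_le:
  assumes "norm (h z) \<le> 1" "norm v \<le> 1" "0 < e"
  shows "norm (blend_at_1 h v e z - v) \<le> norm (z - 1) / e * 2"
proof -
  define c where "c = min 1 (norm (z - 1) / e)"
  have c: "0 \<le> c" "c \<le> norm (z - 1) / e"
    using \<open>0 < e\<close> by (simp_all add: c_def)
  have "norm (h z - v) \<le> 2"
    using norm_triangle_ineq4[of "h z" v] assms(1,2) by simp
  have "blend_at_1 h v e z - v = complex_of_real c * (h z - v)"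
    by (simp add: blend_at_1_def Let_def flip: c_def) (simp add: algebra_simps)
  then have "norm (blend_at_1 h v e z - v) = c * norm (h z - v)"
    using c by (simp add: norm_mult)
  also have "\<dots> \<le> norm (z - 1) / e * 2"
    using c \<open>norm (h z - v) \<le> 2\<close> by (intro mult_mono) auto
  finally show ?thesis .
qed

lemma continuous_on_blend_at_1:
  assumes cont: "\<And>z. norm z = 1 \<Longrightarrow> z \<noteq> 1 \<Longrightarrow> isCont h z"
    and bound: "\<And>z. norm z = 1 \<Longrightarrow> norm (h z) \<le> 1" and "norm v \<le> 1" "0 < e"
  shows "continuous_on (sphere 0 1) (blend_at_1 h v e)"
  unfolding continuous_on_eq_continuous_within
proof
  fix z :: complex assume "z \<in> sphere 0 1"
  then have z: "norm z = 1"
    by simp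
  show "continuous (at z within sphere 0 1) (blend_at_1 h v e)"
  proof (cases "z = 1")
    case False
    have "isCont (blend_at_1 h v e) z"
      unfolding blend_at_1_def Let_def using cont[OF z False] \<open>0 < e\<close>
      by (intro continuous_intros) auto
    then show ?thesis
      by (rule continuous_at_imp_continuous_within)
  next
    case True
    have "((\<lambda>w. blend_at_1 h v e w - v) \<longlongrightarrow> 0) (at 1 within sphere 0 1)"
    proof (rule Lim_null_comparison)
      show "\<forall>\<^sub>F w in at 1 within sphere 0 1. norm (blend_at_1 h v e w - v) \<le> norm (w - 1) / e * 2"
        unfolding eventually_at_filter
        by (intro always_eventually allI impI norm_blend_at_1_diff_le bound \<open>norm v \<le> 1\<close> \<open>0 < e\<close>) simp
      show "((\<lambda>w. norm (w - 1) / e * 2) \<longlongrightarrow> 0) (at 1 within sphere 0 1)"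
        using \<open>0 < e\<close> by (auto intro!: tendsto_eq_intros)
    qed
    then show ?thesis
      using True by (simp add: continuous_within Lim_null[symmetric])
  qed
qed

lemma tendsto_approx_blend_at_1:
  assumes "e \<longlonglongrightarrow> 0" "\<And>N. 0 < e N"
    and close: "\<And>N. norm (p N z - blend_at_1 h v (e N) z) \<le> e N"
  shows "z \<noteq> 1 \<Longrightarrow> (\<lambda>N. p N z) \<longlonglongrightarrow> h z" and "z = 1 \<Longrightarrow> (\<lambda>N. p N z) \<longlonglongrightarrow> v"
proof -
  have limit: "(\<lambda>N. p N z) \<longlonglongrightarrow> w" if "\<forall>\<^sub>F N in sequentially. norm (p N z - w) \<le> e N" for w
    using Lim_null_comparison[OF that \<open>e \<longlonglongrightarrow> 0\<close>] by (rule LIM_zero_cancel)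
  show "(\<lambda>N. p N z) \<longlonglongrightarrow> v" if "z = 1"
    using close that by (intro limit) simp
  assume "z \<noteq> 1"
  then have "\<forall>\<^sub>F N in sequentially. e N < norm (z - 1)"
    using order_tendstoD(2)[OF \<open>e \<longlonglongrightarrow> 0\<close>] by simp
  then have "\<forall>\<^sub>F N in sequentially. norm (p N z - h z) \<le> e N"
  proof eventually_elim
    case (elim N)
    then have "blend_at_1 h v (e N) z = h z"
      by (intro blend_at_1_far assms(2)) simp
    with close[of N] show ?case
      by simp
  qed
  then show "(\<lambda>N. p N z) \<longlonglongrightarrow> h z"
    by (rule limit)
qed

lemma polynomials_tendsto_on_circle:
  fixes h :: "complex \<Rightarrow> complex"
  assumes cont: "\<And>z. norm z = 1 \<Longrightarrow> z \<noteq> 1 \<Longrightarrow> isCont h z"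
    and bound: "\<And>z. norm z = 1 \<Longrightarrow> norm (h z) \<le> 1" and v: "norm v \<le> 1"
  shows "\<exists>p :: nat \<Rightarrow> complex \<Rightarrow> complex. (\<forall>N. polynomial_function (p N)) \<and>
    (\<forall>N z. norm z = 1 \<longrightarrow> norm (p N z) \<le> 2) \<and>
    (\<forall>z. norm z = 1 \<and> z \<noteq> 1 \<longrightarrow> (\<lambda>N. p N z) \<longlonglongrightarrow> h z) \<and>
    (\<lambda>N. p N 1) \<longlonglongrightarrow> v"
proof -
  txt \<open>h need not be continuous at 1, so Stone-Weierstrass is applied to blend_at_1 h v (e N),
    which is continuous on the circle, agrees with h away from 1 and takes the value v at 1.\<close>
  define e where "e N = inverse (real (Suc N))" for N
  have e: "0 < e N" "e N \<le> 1" for N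
    by (simp_all add: e_def inverse_le_1_iff)
  have "e \<longlonglongrightarrow> 0"
    unfolding e_def by (rule LIMSEQ_inverse_real_of_nat)
  have "\<exists>g. polynomial_function g \<and> (\<forall>z\<in>sphere 0 1. norm (blend_at_1 h v (e N) z - g z) < e N)" for N
    using continuous_on_blend_at_1[OF cont bound v e(1)] e(1)
    by (intro Stone_Weierstrass_polynomial_function compact_sphere)
  then obtain p where p: "\<And>N. polynomial_function (p N)"
    and close: "\<And>N z. norm z = 1 \<Longrightarrow> norm (p N z - blend_at_1 h v (e N) z) \<le> e N"
    by (metis less_imp_le mem_sphere_0 norm_minus_commute)
  have p_bound: "norm (p N z) \<le> 2" if z: "norm z = 1" for N z
  proof -
    have "norm (p N z) \<le> norm (blend_at_1 h v (e N) z) + norm (p N z - blend_at_1 h v (e N) z)"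
      by (rule norm_triangle_sub)
    also have "\<dots> \<le> 1 + 1"
      using norm_blend_at_1_le[of h z v "e N", OF bound[OF z] v e(1)] close[OF z, of N] e(2)[of N]
      by (intro add_mono) auto
    finally show ?thesis
      by simp
  qed
  have p_lim: "(\<lambda>N. p N z) \<longlonglongrightarrow> h z" if "norm z = 1" "z \<noteq> 1" for z
    using tendsto_approx_blend_at_1(1)[of e p z h v, OF \<open>e \<longlonglongrightarrow> 0\<close> e(1) close[OF that(1)] that(2)] .
  have "(\<lambda>N. p N 1) \<longlonglongrightarrow> v"
    using tendsto_approx_blend_at_1(2)[of e p 1 h v, OF \<open>e \<longlonglongrightarrow> 0\<close> e(1) close[of 1]] by simp
  with p p_bound p_lim show ?thesis
    by (intro exI[of _ p]) auto
qed

section \<open>The zero set of the Fourier transform\<close>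

lemma prod_cis: "(\<Prod>i\<in>I. cis (f i)) = cis (\<Sum>i\<in>I. f i)"
  by (induction I rule: infinite_finite_induct) (simp_all add: cis_mult)

text \<open>As t runs through [0, 1], cis (2 pi a t) runs from 1 to cis (2 pi a); these differ in
  general, so the value prescribed at z = 1 is the one for the endpoint lying in the interval.\<close>
lemma polynomials_tendsto_cis_half_open:
  "\<exists>p :: nat \<Rightarrow> complex \<Rightarrow> complex. (\<forall>N. polynomial_function (p N)) \<and>
    (\<forall>N z. norm z = 1 \<longrightarrow> norm (p N z) \<le> 2) \<and>
    (\<forall>t \<in> (if left then {0..<1} else {0<..1}). (\<lambda>N. p N (cis (2 * pi * t))) \<longlonglongrightarrow> cis (2 * pi * a * t))"
proof -
  define v where "v = (if left then 1 else cis (2 * pi * a))"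
  have v: "norm v \<le> 1"
    by (simp add: v_def)
  have cont: "isCont (arc_power a) z" if "norm z = 1" "z \<noteq> 1" for z
    using that by (rule isCont_arc_power)
  have bound: "norm (arc_power a z) \<le> 1" if "norm z = 1" for z
    by simp
  obtain p where p_poly: "\<forall>N. polynomial_function (p N)"
    and p_bound: "\<forall>N z. norm z = 1 \<longrightarrow> norm (p N z) \<le> 2"
    and p_lim: "\<forall>z. norm z = 1 \<and> z \<noteq> 1 \<longrightarrow> (\<lambda>N. p N z) \<longlonglongrightarrow> arc_power a z"
    and p_lim1: "(\<lambda>N. p N 1) \<longlonglongrightarrow> v"
    using polynomials_tendsto_on_circle[of "arc_power a" v] cont bound v by auto
  have "(\<lambda>N. p N (cis (2 * pi * t))) \<longlonglongrightarrow> cis (2 * pi * a * t)"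
    if t: "t \<in> (if left then {0..<1} else {0<..1})" for t
  proof (cases "0 < t \<and> t < 1")
    case True
    then have "cis (2 * pi * t) \<noteq> 1"
      by (simp add: cis_ne_1)
    then have "(\<lambda>N. p N (cis (2 * pi * t))) \<longlonglongrightarrow> arc_power a (cis (2 * pi * t))"
      using p_lim by simp
    also have "arc_power a (cis (2 * pi * t)) = cis (2 * pi * a * t)"
      using True by (simp add: arc_power_cis)
    finally show ?thesis .
  next
    case False
    with t consider "left" "t = 0" | "\<not> left" "t = 1"
      by (auto split: if_splits)
    then show ?thesis
      using p_lim1 by cases (simp_all add: v_def)
  qed
  with p_poly p_bound show ?thesis
    by blast
qed

lemma trig_polys_tendsto_cis_AE:
  fixes \<nu> :: "(real ^ 'n::finite) measure"
  assumes half_open: "\<And>i. (AE x in \<nu>. 0 \<le> x $ i \<and> x $ i < 1) \<or> (AE x in \<nu>. 0 < x $ i \<and> x $ i \<le> 1)"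
  obtains T where "\<And>N. trig_poly (T N)" "\<And>N x. norm (T N x) \<le> 2 ^ CARD('n)"
    "AE x in \<nu>. (\<lambda>N. T N x) \<longlonglongrightarrow> cis (2 * pi * (\<xi> \<bullet> x))"
proof -
  define I where "I i = (if AE x in \<nu>. 0 \<le> x $ i \<and> x $ i < 1 then {0..<1} else {0<..1 :: real})" for i
  have "\<exists>p. (\<forall>N. polynomial_function (p N)) \<and> (\<forall>N z. norm z = 1 \<longrightarrow> norm (p N z) \<le> 2) \<and>
      (\<forall>t \<in> I i. (\<lambda>N. p N (cis (2 * pi * t))) \<longlonglongrightarrow> cis (2 * pi * \<xi> $ i * t))" for i
    unfolding I_def by (rule polynomials_tendsto_cis_half_open)
  then obtain p where p_poly: "\<And>i N. polynomial_function (p i N)"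
    and p_bound: "\<And>i N z. norm z = 1 \<Longrightarrow> norm (p i N z) \<le> 2"
    and p_lim: "\<And>i t. t \<in> I i \<Longrightarrow> (\<lambda>N. p i N (cis (2 * pi * t))) \<longlonglongrightarrow> cis (2 * pi * \<xi> $ i * t)"
    by metis
  define T where "T N x = (\<Prod>i\<in>UNIV. p i N (cis (2 * pi * x $ i)))" for N x
  show ?thesis
  proof (rule that)
    show "trig_poly (T N)" for N
      unfolding T_def by (intro trig_poly_prod trig_poly_polynomial_function p_poly) auto
    show "norm (T N x) \<le> 2 ^ CARD('n)" for N x
    proof -
      have "norm (T N x) \<le> (\<Prod>i\<in>UNIV. norm (p i N (cis (2 * pi * x $ i))))"
        unfolding T_def by (rule norm_prod_le)
      also have "\<dots> \<le> (\<Prod>i\<in>(UNIV :: 'n set). 2)"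
        by (intro prod_mono) (simp add: p_bound)
      finally show ?thesis
        by simp
    qed
    have "AE x in \<nu>. \<forall>i. x $ i \<in> I i"
      using half_open by (subst AE_all_countable) (auto simp: I_def)
    then show "AE x in \<nu>. (\<lambda>N. T N x) \<longlonglongrightarrow> cis (2 * pi * (\<xi> \<bullet> x))"
    proof eventually_elim
      case (elim x)
      then have "(\<lambda>N. T N x) \<longlonglongrightarrow> (\<Prod>i\<in>UNIV. cis (2 * pi * \<xi> $ i * x $ i))"
        unfolding T_def by (intro tendsto_prod p_lim) simp
      then show ?case
        by (simp add: prod_cis inner_vec_def sum_distrib_left mult.assoc)
    qed
  qed
qed

lemma Zset_eq_empty_if_AE_half_open:
  fixes \<nu> :: "(real ^ 'n::finite) measure"
  assumes \<nu>_borel: "sets \<nu> = sets borel" and \<nu>_prob: "prob_space \<nu>"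
    and half_open: "\<And>i. (AE x in \<nu>. 0 \<le> x $ i \<and> x $ i < 1) \<or> (AE x in \<nu>. 0 < x $ i \<and> x $ i \<le> 1)"
  shows "Zset \<nu> = {}"
proof (rule equals0I)
  fix \<xi> assume \<xi>: "\<xi> \<in> Zset \<nu>"
  obtain T where T: "\<And>N. trig_poly (T N)" "\<And>N x. norm (T N x) \<le> 2 ^ CARD('n)"
    and T_lim: "AE x in \<nu>. (\<lambda>N. T N x) \<longlonglongrightarrow> cis (2 * pi * (\<xi> \<bullet> x))"
    using trig_polys_tendsto_cis_AE[OF half_open] by blast
  have \<nu>_finite: "finite_measure \<nu>"
    using \<nu>_prob by (rule prob_space.finite_measure)
  let ?s = "\<lambda>N x. cis (- 2 * pi * (\<xi> \<bullet> x)) * T N x"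
  have "(\<lambda>N. LINT x|\<nu>. ?s N x) \<longlonglongrightarrow> (LINT x|\<nu>. 1)"
  proof (rule integral_dominated_convergence[where w = "\<lambda>_. 2 ^ CARD('n)"])
    show "?s N \<in> borel_measurable \<nu>" for N
      using trig_poly_continuous_bounded[OF T(1)[of N]] \<nu>_borel
      by (intro measurable_continuous_sets_borel) (auto intro!: continuous_intros)
    show "AE x in \<nu>. (\<lambda>N. ?s N x) \<longlonglongrightarrow> 1"
      using T_lim by eventually_elim (auto intro!: tendsto_eq_intros simp: cis_mult)
    show "AE x in \<nu>. norm (?s N x) \<le> 2 ^ CARD('n)" for N
      using T(2) by (simp add: norm_mult)
  qed (use \<nu>_finite in \<open>simp_all add: finite_measure.integrable_const\<close>)
  moreover have "(LINT x|\<nu>. ?s N x) = 0" for N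
    by (rule integral_cis_mult_trig_poly_eq_0[OF \<nu>_borel \<nu>_finite \<xi> T(1)])
  moreover have "(LINT x|\<nu>. 1 :: complex) = 1"
    using \<nu>_prob by (simp add: prob_space.prob_space)
  ultimately show False
    using LIMSEQ_const_iff[of "0 :: complex" 1] by simp
qed

theorem corollary4p3:
  fixes m :: "nat \<Rightarrow> 'n::finite \<Rightarrow> nat"
    and B :: "nat \<Rightarrow> (nat ^ 'n) set"
    and \<nu> :: "(real ^ 'n) measure"
  assumes D: "\<And>k. k \<ge> 1 \<Longrightarrow> in_D m B k"
    and \<nu>_borel: "sets \<nu> = sets borel"
    and \<nu>_prob: "prob_space \<nu>"
    and \<nu>_lim: "weak_conv_Rd (\<lambda>k. measure_pmf (fin_conv m B k)) \<nu>"
  shows "Zset \<nu> = {}"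
proof -
  interpret admissible_digits m B
    using D by unfold_locales
  have "finite_measure \<nu>"
    using \<nu>_prob by (rule prob_space.finite_measure)
  with \<nu>_borel \<nu>_prob \<nu>_lim show ?thesis
    by (intro Zset_eq_empty_if_AE_half_open AE_weak_limit_half_open)
qed

end
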